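(* Let $G$ be a group acting on a set $X$ on the left, and let $\mathfrak{F}$ be any family of subsets of $X$. Then the filter $\mathfrak{R}_{\mathfrak{F}}$ on $G$ is left topological.
   Context: For $A\in\mathfrak{F}$ let $\Delta_{\mathfrak{F}}(A)=\{g\in G: gB\subseteq A$ for some $B\in\mathfrak{F}$ with $B\subseteq A\}$ (note $e\in\Delta_{\mathfrak{F}}(A)$). $\mathfrak{R}_{\mathfrak{F}}$ is the filter on $G$ with base consisting of the sets $\bigcap_{A\in\mathfrak{F}'}\Delta_{\mathfrak{F}}(A)$, $\mathfrak{F}'$ a finite subfamily of $\mathfrak{F}$. A filter $\varphi$ on $G$ is left topological if there is a topology on $G$ in which every left shift $x\mapsto gx$ is continuous and for which $\varphi$ is the filter of neighbourhoods of the identity $e$ (i.e. $\varphi$ is a base at $e$). *)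

theory Defs
  imports "HOL-Algebra.Group_Action" "HOL-Analysis.Abstract_Topology"
begin

definition Delta_fam :: "('g, 'm) monoid_scheme \<Rightarrow> ('g \<Rightarrow> 'x \<Rightarrow> 'x) \<Rightarrow> 'x set set \<Rightarrow> 'x set \<Rightarrow> 'g set"
  where "Delta_fam G act F A = {g \<in> carrier G. \<exists>B\<in>F. B \<subseteq> A \<and> act g ` B \<subseteq> A}"

definition R_filter :: "('g, 'm) monoid_scheme \<Rightarrow> ('g \<Rightarrow> 'x \<Rightarrow> 'x) \<Rightarrow> 'x set set \<Rightarrow> 'g set set"
  where "R_filter G act F =
    {U. U \<subseteq> carrier G \<and>
        (\<exists>F'. finite F' \<and> F' \<subseteq> F \<and> carrier G \<inter> (\<Inter>A\<in>F'. Delta_fam G act F A) \<subseteq> U)}"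

definition left_topological :: "('g, 'm) monoid_scheme \<Rightarrow> 'g set set \<Rightarrow> bool"
  where "left_topological G \<Phi> \<longleftrightarrow>
    (\<exists>T. topspace T = carrier G \<and>
         (\<forall>g\<in>carrier G. continuous_map T T (\<lambda>x. g \<otimes>\<^bsub>G\<^esub> x)) \<and>
         \<Phi> = {U. U \<subseteq> carrier G \<and> (\<exists>V. openin T V \<and> \<one>\<^bsub>G\<^esub> \<in> V \<and> V \<subseteq> U)})"

end

theory Submission
  imports Defs
begin

text \<open>
  If a family \<open>\<B>\<close> of subsets of a group contains \<open>e\<close> in each member, is directed under
  intersection, and satisfies \<open>\<forall>w \<in> B. \<exists>B' \<in> \<B>. wB' \<subseteq> B\<close>, then the sets \<open>W\<close> with
  \<open>\<forall>x \<in> W. \<exists>B \<in> \<B>. xB \<subseteq> W\<close> form a topology with continuous left shifts whose neighbourhood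
  filter at \<open>e\<close> is generated by \<open>\<B>\<close>. The finite intersections of the sets \<open>\<Delta>\<^sub>\<F>(A)\<close> are
  such a family: if \<open>w \<in> \<Delta>\<^sub>\<F>(A)\<close> is witnessed by \<open>B \<subseteq> A\<close> with \<open>wB \<subseteq> A\<close>, then
  \<open>w \<Delta>\<^sub>\<F>(B) \<subseteq> \<Delta>\<^sub>\<F>(A)\<close>, since \<open>hC \<subseteq> B\<close> gives \<open>whC \<subseteq> wB \<subseteq> A\<close>.
\<close>

lemma l_coset_mono: "A \<subseteq> B \<Longrightarrow> x <#\<^bsub>G\<^esub> A \<subseteq> x <#\<^bsub>G\<^esub> B"
  unfolding l_coset_def by blast

locale left_shift_base = group G for G (structure) +
  fixes \<B> :: "'a set set"
  assumes base_nonempty: "\<B> \<noteq> {}"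
    and base_subset_carrier: "B \<in> \<B> \<Longrightarrow> B \<subseteq> carrier G"
    and one_mem_base: "B \<in> \<B> \<Longrightarrow> \<one> \<in> B"
    and base_Int: "B1 \<in> \<B> \<Longrightarrow> B2 \<in> \<B> \<Longrightarrow> \<exists>B\<in>\<B>. B \<subseteq> B1 \<inter> B2"
    and base_shift: "B \<in> \<B> \<Longrightarrow> w \<in> B \<Longrightarrow> \<exists>B'\<in>\<B>. w <# B' \<subseteq> B"
begin

definition shift_open :: "'a set \<Rightarrow> bool"
  where "shift_open W \<longleftrightarrow> W \<subseteq> carrier G \<and> (\<forall>x\<in>W. \<exists>B\<in>\<B>. x <# B \<subseteq> W)"

definition shift_topology :: "'a topology"
  where "shift_topology = topology shift_open"

lemma istopology_shift_open: "istopology shift_open"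
  unfolding istopology_def
proof (intro conjI allI impI)
  fix S T assume "shift_open S" "shift_open T"
  show "shift_open (S \<inter> T)"
    unfolding shift_open_def
  proof (intro conjI ballI)
    show "S \<inter> T \<subseteq> carrier G"
      using \<open>shift_open S\<close> shift_open_def by blast
    fix x assume "x \<in> S \<inter> T"
    then obtain B1 B2 where "B1 \<in> \<B>" "x <# B1 \<subseteq> S" "B2 \<in> \<B>" "x <# B2 \<subseteq> T"
      using \<open>shift_open S\<close> \<open>shift_open T\<close> unfolding shift_open_def by blast
    moreover obtain B where "B \<in> \<B>" "B \<subseteq> B1" "B \<subseteq> B2"
      using base_Int calculation by (meson le_inf_iff)
    ultimately have "x <# B \<subseteq> S \<inter> T"
      using l_coset_mono by (metis le_inf_iff order_trans)
    then show "\<exists>B\<in>\<B>. x <# B \<subseteq> S \<inter> T"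
      using \<open>B \<in> \<B>\<close> by blast
  qed
next
  fix K assume "\<forall>S\<in>K. shift_open S"
  then show "shift_open (\<Union>K)"
    unfolding shift_open_def by (meson Union_iff Union_least Union_upper order_trans)
qed

lemma openin_shift_topology: "openin shift_topology W \<longleftrightarrow> shift_open W"
  by (simp add: shift_topology_def istopology_shift_open)

lemma topspace_shift_topology: "topspace shift_topology = carrier G"
proof -
  obtain B where "B \<in> \<B>"
    using base_nonempty by blast
  then have "shift_open (carrier G)"
    unfolding shift_open_def using base_subset_carrier l_coset_subset_G by blast
  then show ?thesis
    unfolding topspace_def openin_shift_topology shift_open_def by blast
qed

lemma continuous_map_left_mult:
  assumes "g \<in> carrier G"
  shows "continuous_map shift_topology shift_topology (\<lambda>x. g \<otimes> x)"
  unfolding continuous_map_def topspace_shift_topology openin_shift_topology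
proof (intro conjI allI impI)
  show "(\<lambda>x. g \<otimes> x) \<in> carrier G \<rightarrow> carrier G"
    using assms by simp
  fix U assume "shift_open U"
  show "shift_open {x \<in> carrier G. g \<otimes> x \<in> U}"
    unfolding shift_open_def
  proof (intro conjI ballI)
    fix x assume x: "x \<in> {x \<in> carrier G. g \<otimes> x \<in> U}"
    then obtain B where B: "B \<in> \<B>" "(g \<otimes> x) <# B \<subseteq> U"
      using \<open>shift_open U\<close> unfolding shift_open_def by blast
    have "g <# (x <# B) \<subseteq> U"
      using B x assms by (simp add: lcos_m_assoc base_subset_carrier)
    moreover have "x <# B \<subseteq> carrier G"
      using B(1) x by (simp add: l_coset_subset_G base_subset_carrier)
    ultimately show "\<exists>B\<in>\<B>. x <# B \<subseteq> {x \<in> carrier G. g \<otimes> x \<in> U}"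
      using B(1) by (auto simp: l_coset_def)
  qed auto
qed

lemma shift_open_shift_interior:
  "shift_open {x \<in> carrier G. \<exists>B\<in>\<B>. x <# B \<subseteq> U}"
  unfolding shift_open_def
proof (intro conjI ballI)
  fix x assume "x \<in> {x \<in> carrier G. \<exists>B\<in>\<B>. x <# B \<subseteq> U}"
  then obtain B where x: "x \<in> carrier G" and B: "B \<in> \<B>" "x <# B \<subseteq> U"
    by blast
  have "y \<in> carrier G \<and> (\<exists>B'\<in>\<B>. y <# B' \<subseteq> U)" if "y \<in> x <# B" for y
  proof -
    obtain b where b: "b \<in> B" "y = x \<otimes> b"
      using \<open>y \<in> x <# B\<close> unfolding l_coset_def by blast
    then obtain B' where B': "B' \<in> \<B>" "b <# B' \<subseteq> B"
      using base_shift B(1) by blast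
    have "b \<in> carrier G"
      using b(1) B(1) base_subset_carrier by blast
    then have "y <# B' = x <# (b <# B')"
      using b(2) x B'(1) by (simp add: lcos_m_assoc base_subset_carrier)
    also have "\<dots> \<subseteq> U"
      using l_coset_mono[OF B'(2)] B(2) by blast
    finally show ?thesis
      using B'(1) \<open>b \<in> carrier G\<close> b(2) x by blast
  qed
  then show "\<exists>B\<in>\<B>. x <# B \<subseteq> {x \<in> carrier G. \<exists>B\<in>\<B>. x <# B \<subseteq> U}"
    using B(1) by blast
qed auto

lemma shift_nhds_one_iff:
  "(\<exists>V. openin shift_topology V \<and> \<one> \<in> V \<and> V \<subseteq> U) \<longleftrightarrow> (\<exists>B\<in>\<B>. B \<subseteq> U)"
proof
  assume "\<exists>V. openin shift_topology V \<and> \<one> \<in> V \<and> V \<subseteq> U"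
  then obtain V B where "V \<subseteq> U" "B \<in> \<B>" "\<one> <# B \<subseteq> V"
    unfolding openin_shift_topology shift_open_def by blast
  then show "\<exists>B\<in>\<B>. B \<subseteq> U"
    by (metis lcos_mult_one base_subset_carrier order_trans)
next
  assume "\<exists>B\<in>\<B>. B \<subseteq> U"
  then obtain B where B: "B \<in> \<B>" "B \<subseteq> U"
    by blast
  define V where "V = {x \<in> carrier G. \<exists>B\<in>\<B>. x <# B \<subseteq> U}"
  have "\<one> <# B \<subseteq> U"
    using B by (simp add: lcos_mult_one base_subset_carrier)
  then have "\<one> \<in> V"
    unfolding V_def using B(1) by blast
  moreover have "V \<subseteq> U"
  proof
    fix x assume "x \<in> V"
    then obtain B' where "x \<in> carrier G" "B' \<in> \<B>" "x <# B' \<subseteq> U"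
      unfolding V_def by blast
    moreover have "x \<otimes> \<one> \<in> x <# B'"
      using one_mem_base[OF \<open>B' \<in> \<B>\<close>] unfolding l_coset_def by blast
    ultimately show "x \<in> U"
      by auto
  qed
  moreover have "openin shift_topology V"
    unfolding V_def openin_shift_topology by (rule shift_open_shift_interior)
  ultimately show "\<exists>V. openin shift_topology V \<and> \<one> \<in> V \<and> V \<subseteq> U"
    by blast
qed

theorem left_topological_base_filter:
  "left_topological G {U. U \<subseteq> carrier G \<and> (\<exists>B\<in>\<B>. B \<subseteq> U)}"
  unfolding left_topological_def
proof (intro exI conjI)
  show "topspace shift_topology = carrier G"
    by (rule topspace_shift_topology)
  show "\<forall>g\<in>carrier G. continuous_map shift_topology shift_topology (\<lambda>x. g \<otimes> x)"
    using continuous_map_left_mult by blast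
  show "{U. U \<subseteq> carrier G \<and> (\<exists>B\<in>\<B>. B \<subseteq> U)} =
    {U. U \<subseteq> carrier G \<and> (\<exists>V. openin shift_topology V \<and> \<one> \<in> V \<and> V \<subseteq> U)}"
    by (simp only: shift_nhds_one_iff)
qed

end

definition R_filter_base :: "('g, 'm) monoid_scheme \<Rightarrow> ('g \<Rightarrow> 'x \<Rightarrow> 'x) \<Rightarrow> 'x set set \<Rightarrow> 'g set set"
  where "R_filter_base G act F =
    {carrier G \<inter> (\<Inter>A\<in>F'. Delta_fam G act F A) | F'. finite F' \<and> F' \<subseteq> F}"

lemma R_filter_eq_base_filter:
  "R_filter G act F = {U. U \<subseteq> carrier G \<and> (\<exists>B\<in>R_filter_base G act F. B \<subseteq> U)}"
  unfolding R_filter_def R_filter_base_def by blast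

context group_action
begin

lemma group: "group G"
  using group_hom group_hom.axioms(1) by blast

lemma one_mem_Delta_fam:
  assumes "A \<in> F" "A \<subseteq> E"
  shows "\<one> \<in> Delta_fam G \<phi> F A"
proof -
  interpret group G
    by (rule group)
  have "\<phi> \<one> ` A = A"
    using assms(2) id_eq_one[symmetric] by auto
  then show ?thesis
    unfolding Delta_fam_def using assms(1) by blast
qed

lemma mult_mem_Delta_fam:
  assumes "F \<subseteq> Pow E" and w: "w \<in> carrier G" and B: "B \<in> F" "B \<subseteq> A" "\<phi> w ` B \<subseteq> A"
    and h: "h \<in> Delta_fam G \<phi> F B"
  shows "w \<otimes> h \<in> Delta_fam G \<phi> F A"
proof -
  interpret group G
    by (rule group)
  obtain C where C: "C \<in> F" "C \<subseteq> B" "\<phi> h ` C \<subseteq> B" and "h \<in> carrier G"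
    using h unfolding Delta_fam_def by blast
  have "C \<subseteq> E"
    using C(1) assms(1) by blast
  then have "\<phi> (w \<otimes> h) ` C = \<phi> w ` \<phi> h ` C"
    using composition_rule[OF _ w \<open>h \<in> carrier G\<close>] by (auto simp: image_iff subset_iff)
  also have "\<dots> \<subseteq> A"
    using C(3) B(3) by blast
  finally have "\<phi> (w \<otimes> h) ` C \<subseteq> A" .
  moreover have "C \<subseteq> A"
    using C(2) B(2) by blast
  moreover have "w \<otimes> h \<in> carrier G"
    using w \<open>h \<in> carrier G\<close> by simp
  ultimately show ?thesis
    unfolding Delta_fam_def using C(1) by blast
qed

lemma left_shift_base_R_filter_base:
  assumes "F \<subseteq> Pow E"
  shows "left_shift_base G (R_filter_base G \<phi> F)"
proof -
  interpret group G
    by (rule group)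
  show ?thesis
  proof
    show "R_filter_base G \<phi> F \<noteq> {}"
      unfolding R_filter_base_def by blast
  next
    fix B assume "B \<in> R_filter_base G \<phi> F"
    then show "B \<subseteq> carrier G"
      unfolding R_filter_base_def by blast
  next
    fix B assume "B \<in> R_filter_base G \<phi> F"
    then obtain F' where "F' \<subseteq> F" "B = carrier G \<inter> (\<Inter>A\<in>F'. Delta_fam G \<phi> F A)"
      unfolding R_filter_base_def by blast
    moreover have "\<one> \<in> Delta_fam G \<phi> F A" if "A \<in> F" for A
      using one_mem_Delta_fam[OF that] that assms by blast
    ultimately show "\<one> \<in> B"
      by auto
  next
    fix B1 B2 assume "B1 \<in> R_filter_base G \<phi> F" "B2 \<in> R_filter_base G \<phi> F"
    then obtain F1 F2 where "finite F1" "F1 \<subseteq> F" "finite F2" "F2 \<subseteq> F"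
      and "B1 = carrier G \<inter> (\<Inter>A\<in>F1. Delta_fam G \<phi> F A)"
      and "B2 = carrier G \<inter> (\<Inter>A\<in>F2. Delta_fam G \<phi> F A)"
      unfolding R_filter_base_def by blast
    then have "B1 \<inter> B2 \<in> R_filter_base G \<phi> F"
      unfolding R_filter_base_def by (intro CollectI exI[of _ "F1 \<union> F2"]) auto
    then show "\<exists>B\<in>R_filter_base G \<phi> F. B \<subseteq> B1 \<inter> B2"
      by blast
  next
    fix B w assume "B \<in> R_filter_base G \<phi> F" "w \<in> B"
    then obtain F' where F': "finite F'" "F' \<subseteq> F" and B: "B = carrier G \<inter> (\<Inter>A\<in>F'. Delta_fam G \<phi> F A)"
      unfolding R_filter_base_def by blast
    have w: "w \<in> carrier G"
      using \<open>w \<in> B\<close> B by blast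
    have "\<forall>A\<in>F'. \<exists>C. C \<in> F \<and> C \<subseteq> A \<and> \<phi> w ` C \<subseteq> A"
      using \<open>w \<in> B\<close> B unfolding Delta_fam_def by blast
    then obtain C where C: "\<forall>A\<in>F'. C A \<in> F \<and> C A \<subseteq> A \<and> \<phi> w ` C A \<subseteq> A"
      by (metis bchoice)
    define B' where "B' = carrier G \<inter> (\<Inter>A\<in>C ` F'. Delta_fam G \<phi> F A)"
    have "B' \<in> R_filter_base G \<phi> F"
      unfolding R_filter_base_def B'_def using F' C by (intro CollectI exI[of _ "C ` F'"]) auto
    moreover have "w <# B' \<subseteq> B"
    proof
      fix y assume "y \<in> w <# B'"
      then obtain h where h: "h \<in> B'" "y = w \<otimes> h"
        unfolding l_coset_def by blast
      have "w \<otimes> h \<in> Delta_fam G \<phi> F A" if "A \<in> F'" for A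
        using C that h(1) unfolding B'_def by (intro mult_mem_Delta_fam[OF assms w]) auto
      moreover have "w \<otimes> h \<in> carrier G"
        using w h(1) unfolding B'_def by simp
      ultimately show "y \<in> B"
        unfolding B h(2) by blast
    qed
    ultimately show "\<exists>B'\<in>R_filter_base G \<phi> F. w <# B' \<subseteq> B"
      by blast
  qed
qed

end

theorem proposition5p5:
  fixes G (structure) and X :: "'x set" and act :: "'g \<Rightarrow> 'x \<Rightarrow> 'x" and F :: "'x set set"
  assumes "group_action G X act"
    and "F \<subseteq> Pow X"
  shows "left_topological G (R_filter G act F)"
proof -
  interpret left_shift_base G "R_filter_base G act F"
    using group_action.left_shift_base_R_filter_base[OF assms] .
  show ?thesis
    unfolding R_filter_eq_base_filter by (rule left_topological_base_filter)
qed

end
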